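(* Let $(D_n)_{n\in\mathbb N}$, $D_n=(\mathcal V_n,\mathcal E_n)$, be finite connected graphs with distinct vertices $a_n,b_n\in\mathcal V_n$, and let $\Gamma_D$ be the associated tree-like graph. For $p\in[0,1]$: (a) if $\limsup_{n\to\infty}h^{D_n}(p)<1/2$, then $p\le p_c^{\Gamma_D}$; (b) if $\liminf_{n\to\infty}h^{D_n}(p)>1/2$, then $p\ge p_c^{\Gamma_D}$.
   Context: Let $\mathbb T_3=(V_3,E_3)$ be the infinite $3$-regular tree with a fixed root $\rho$. For an edge $e\in E_3$, let $f(e)$ be its endpoint closer to $\rho$ and $s(e)$ the other endpoint. The graph $\Gamma_D$ is obtained from $\mathbb T_3$ by replacing each edge $e$ with $\mathrm{dist}(s(e),\rho)=n$ by a copy $D_e$ of $D_n$, identifying $a_n$ with $f(e)$ and $b_n$ with $s(e)$ (copies for different edges are otherwise disjoint). Graphs may have multiple edges. For a finite graph $D_n$, $h^{D_n}(p)$ is the probability, under Bernoulli bond percolation on $D_n$ with parameter $p$ (each edge independently open with probability $p$), that $a_n$ and $b_n$ are connected by a path of open edges. For a graph $G$, $p_c^G$ is the critical point of Bernoulli bond percolation: the probability of an infinite open cluster is $0$ for $p<p_c^G$ and positive for $p>p_c^G$. *)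

theory Defs
  imports "HOL-Probability.Probability"
begin

text \<open>A multigraph is given by a vertex set, an edge set and an endpoint map
  ends :: edge => vertex * vertex (so multiple edges are allowed).
  conn ends S x y: x and y are joined by a path using only edges from S.\<close>

definition conn :: "('e \<Rightarrow> 'v \<times> 'v) \<Rightarrow> 'e set \<Rightarrow> 'v \<Rightarrow> 'v \<Rightarrow> bool" where
  "conn ends S = (\<lambda>x y. \<exists>e\<in>S. ends e = (x, y) \<or> ends e = (y, x))\<^sup>*\<^sup>*"

definition h_conn :: "'e set \<Rightarrow> ('e \<Rightarrow> 'v \<times> 'v) \<Rightarrow> 'v \<Rightarrow> 'v \<Rightarrow> real \<Rightarrow> real" where
  "h_conn E ends a b p =
     measure_pmf.prob (Pi_pmf E False (\<lambda>_. bernoulli_pmf p))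
       {\<omega>. conn ends {e\<in>E. \<omega> e} a b}"

definition perc_measure :: "'e set \<Rightarrow> real \<Rightarrow> ('e \<Rightarrow> bool) measure" where
  "perc_measure E p = PiM E (\<lambda>_. measure_pmf (bernoulli_pmf p))"

definition theta_inf :: "'v set \<Rightarrow> 'e set \<Rightarrow> ('e \<Rightarrow> 'v \<times> 'v) \<Rightarrow> real \<Rightarrow> real" where
  "theta_inf V E ends p =
     measure (perc_measure E p)
       {\<omega> \<in> space (perc_measure E p).
          \<exists>x\<in>V. infinite {y. conn ends {e\<in>E. \<omega> e} x y}}"

definition p_crit :: "'v set \<Rightarrow> 'e set \<Rightarrow> ('e \<Rightarrow> 'v \<times> 'v) \<Rightarrow> real" where
  "p_crit V E ends = Sup {p \<in> {0..1}. theta_inf V E ends p = 0}"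

text \<open>Vertices of T_3 are words: the root is [], the root has children [0],[1],[2],
  every other vertex v has children v@[0], v@[1]; the parent of v is butlast v and
  dist(v, root) = length v. Each non-root vertex v indexes the edge e with s(e) = v.\<close>

definition T3 :: "nat list set" where
  "T3 = {v. case v of [] \<Rightarrow> True | x # xs \<Rightarrow> x < 3 \<and> (\<forall>i\<in>set xs. i < 2)}"

definition gmap :: "(nat \<Rightarrow> 'v) \<Rightarrow> (nat \<Rightarrow> 'v) \<Rightarrow> nat list \<Rightarrow> 'v \<Rightarrow> nat list + (nat list \<times> 'v)" where
  "gmap a b v x =
     (if x = a (length v) then Inl (butlast v)
      else if x = b (length v) then Inl v
      else Inr (v, x))"

definition Gamma_V :: "(nat \<Rightarrow> 'v set) \<Rightarrow> (nat \<Rightarrow> 'v) \<Rightarrow> (nat \<Rightarrow> 'v) \<Rightarrow> (nat list + (nat list \<times> 'v)) set" where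
  "Gamma_V V a b = Inl ` T3 \<union>
     {Inr (v, x) | v x. v \<in> T3 \<and> v \<noteq> [] \<and> x \<in> V (length v) - {a (length v), b (length v)}}"

definition Gamma_E :: "(nat \<Rightarrow> 'e set) \<Rightarrow> (nat list \<times> 'e) set" where
  "Gamma_E E = {(v, e). v \<in> T3 \<and> v \<noteq> [] \<and> e \<in> E (length v)}"

definition Gamma_ends :: "(nat \<Rightarrow> 'e \<Rightarrow> 'v \<times> 'v) \<Rightarrow> (nat \<Rightarrow> 'v) \<Rightarrow> (nat \<Rightarrow> 'v) \<Rightarrow>
    nat list \<times> 'e \<Rightarrow> (nat list + (nat list \<times> 'v)) \<times> (nat list + (nat list \<times> 'v))" where
  "Gamma_ends ends a b ve =
     (case ve of (v, e) \<Rightarrow>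
       (gmap a b v (fst (ends (length v) e)), gmap a b v (snd (ends (length v) e))))"

end

theory Submission
  imports Defs
begin

text \<open>Call the copy \<open>D\<^sub>v\<close> replacing the tree edge that ends in \<open>v\<close> crossed if \<open>a\<^sub>n\<close> and \<open>b\<^sub>n\<close>
  are joined by open edges inside it (\<open>n = |v|\<close>); these events are independent of probability
  \<open>h\<^sub>n(p)\<close>. As the copies are finite, \<open>\<Gamma>\<^sub>D\<close> has an infinite open cluster iff some tree vertex
  starts arbitrarily long descending paths of crossed copies. If \<open>h\<^sub>n(p) \<le> c < 1/2\<close> for \<open>n \<ge> N\<close>,
  the expected number of such paths of length \<open>m\<close> is at most \<open>3 \<cdot> 2\<^sup>m c\<^bsup>m-N\<^esup> \<rightarrow> 0\<close>, so
  \<open>\<theta>(p) = 0\<close> and \<open>p \<le> p\<^sub>c\<close>. If \<open>h\<^sub>n(p) \<ge> h\<^sub>0 > 1/2\<close> for \<open>n > N\<close>, the probability \<open>x\<^sub>m\<close> of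
  such a path from a vertex of depth \<open>\<ge> N\<close> satisfies \<open>x\<^sub>m\<^sub>+\<^sub>1 = 1 - (1 - h x\<^sub>m') (1 - h x\<^sub>m'')\<close>
  over its two children, which keeps it above the positive fixed point \<open>(2h\<^sub>0 - 1)/h\<^sub>0\<^sup>2\<close> of
  \<open>x \<mapsto> 1 - (1 - h\<^sub>0 x)\<^sup>2\<close>. Since \<open>h\<^sub>n\<close> increases with the parameter, \<open>\<theta>(q) > 0\<close> for all
  \<open>q \<ge> p\<close>, so \<open>p\<^sub>c \<le> p\<close>.\<close>

section \<open>Bernoulli product measures\<close>

lemma space_perc_measure: "space (perc_measure J q) = PiE J (\<lambda>_. UNIV)"
  by (simp add: perc_measure_def space_PiM)

lemma prob_space_perc_measure: "prob_space (perc_measure J q)"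
  unfolding perc_measure_def by (intro prob_space_PiM measure_pmf.prob_space_axioms)

lemma sets_perc_measure_finite:
  assumes "finite J" "X \<subseteq> space (perc_measure J q)"
  shows "X \<in> sets (perc_measure J q)"
proof -
  have finX: "finite X"
    using assms by (intro finite_subset[OF assms(2)]) (simp add: space_perc_measure finite_PiE)
  have "X = (\<Union>f\<in>X. PiE J (\<lambda>i. {f i}))"
  proof (intro equalityI subsetI)
    fix x assume "x \<in> X" thus "x \<in> (\<Union>f\<in>X. PiE J (\<lambda>i. {f i}))"
      using assms(2) by (auto simp: space_perc_measure PiE_iff)
  next
    fix x assume "x \<in> (\<Union>f\<in>X. PiE J (\<lambda>i. {f i}))"
    then obtain f where f: "f \<in> X" "x \<in> PiE J (\<lambda>i. {f i})" by blast
    have "f \<in> PiE J (\<lambda>_. UNIV)" using f(1) assms(2) by (auto simp: space_perc_measure)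
    hence "x = f" using f(2) by (auto simp: PiE_iff extensional_def fun_eq_iff)
    thus "x \<in> X" using f(1) by simp
  qed
  also have "\<dots> \<in> sets (perc_measure J q)"
    using finX assms(1) unfolding perc_measure_def
    by (intro sets.finite_UN sets_PiM_I_finite) auto
  finally show ?thesis .
qed

lemma distr_restrict_Pi_pmf_bernoulli:
  assumes fin: "finite J"
  shows "distr (measure_pmf (Pi_pmf J False (\<lambda>_. bernoulli_pmf q))) (perc_measure J q)
           (\<lambda>\<sigma>. restrict \<sigma> J) = perc_measure J q"
  unfolding perc_measure_def
proof (rule product_sigma_finite.PiM_eqI, goal_cases)
  case 1
  interpret product_prob_space "\<lambda>_. measure_pmf (bernoulli_pmf q)" J
    by (intro product_prob_spaceI measure_pmf.prob_space_axioms)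
  show ?case by unfold_locales
next
  case 2 show ?case by (rule fin)
next
  case 3 show ?case by simp
next
  case (4 A)
  let ?P = "measure_pmf (Pi_pmf J False (\<lambda>_. bernoulli_pmf q))"
  have "Pi\<^sub>E J A \<in> sets (Pi\<^sub>M J (\<lambda>i. measure_pmf (bernoulli_pmf q)))"
    using 4 fin by (intro sets_PiM_I_finite) auto
  hence "emeasure (distr ?P (Pi\<^sub>M J (\<lambda>i. measure_pmf (bernoulli_pmf q))) (\<lambda>x. restrict x J)) (Pi\<^sub>E J A)
       = emeasure ?P ((\<lambda>x. restrict x J) -` Pi\<^sub>E J A)"
    by (subst emeasure_distr) (auto simp: space_PiM)
  also have "\<dots> = emeasure ?P (PiE_dflt J False A)"
    by (intro emeasure_eq_AE AE_pmfI) (auto simp: PiE_dflt_def set_Pi_pmf fin)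
  also have "\<dots> = (\<Prod>i\<in>J. emeasure (measure_pmf (bernoulli_pmf q)) (A i))"
    by (simp add: measure_pmf.emeasure_eq_measure measure_Pi_pmf_PiE_dflt fin prod_ennreal)
  finally show ?case .
qed

lemma measure_perc_measure_restrict:
  assumes fin: "finite J" and JI: "J \<subseteq> I"
  shows "measure (perc_measure I q) {\<omega>\<in>space (perc_measure I q). P (restrict \<omega> J)}
       = measure_pmf.prob (Pi_pmf J False (\<lambda>_. bernoulli_pmf q)) {\<sigma>. P (restrict \<sigma> J)}"
proof -
  interpret product_prob_space "\<lambda>_. measure_pmf (bernoulli_pmf q)" I
    by (intro product_prob_spaceI measure_pmf.prob_space_axioms)
  define X where "X = {f\<in>space (perc_measure J q). P f}"
  have X: "X \<in> sets (perc_measure J q)"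
    unfolding X_def using fin by (intro sets_perc_measure_finite) auto
  have emb: "{\<omega>\<in>space (perc_measure I q). P (restrict \<omega> J)}
      = prod_emb I (\<lambda>_. measure_pmf (bernoulli_pmf q)) J X"
    using JI by (auto simp: prod_emb_def X_def space_perc_measure perc_measure_def space_PiM)
  have "emeasure (perc_measure I q) {\<omega>\<in>space (perc_measure I q). P (restrict \<omega> J)}
      = emeasure (perc_measure J q) X"
    unfolding emb using X fin JI unfolding perc_measure_def by (intro emeasure_PiM_emb') auto
  also have "\<dots> = emeasure (distr (measure_pmf (Pi_pmf J False (\<lambda>_. bernoulli_pmf q)))
                      (perc_measure J q) (\<lambda>\<sigma>. restrict \<sigma> J)) X"
    by (simp add: distr_restrict_Pi_pmf_bernoulli fin)
  also have "\<dots> = emeasure (measure_pmf (Pi_pmf J False (\<lambda>_. bernoulli_pmf q)))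
                    ((\<lambda>\<sigma>. restrict \<sigma> J) -` X)"
    using X by (subst emeasure_distr) (auto simp: perc_measure_def measurable_def space_PiM)
  also have "(\<lambda>\<sigma>. restrict \<sigma> J) -` X = {\<sigma>. P (restrict \<sigma> J)}"
    by (auto simp: X_def space_perc_measure)
  finally show ?thesis
    unfolding measure_def by (rule arg_cong)
qed

lemma measure_pmf_prob_pair_times:
  "measure_pmf.prob (pair_pmf M N) (A \<times> B) = measure_pmf.prob M A * measure_pmf.prob N B"
proof -
  have "measure_pmf.prob (pair_pmf M N) (A \<times> B)
      = measure_pmf.prob (pair_pmf M N) ((A \<times> B) \<inter> set_pmf (pair_pmf M N))"
    by (metis measure_Int_set_pmf)
  also have "(A \<times> B) \<inter> set_pmf (pair_pmf M N) = (A \<inter> set_pmf M) \<times> (B \<inter> set_pmf N)"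
    by (auto simp: set_pair_pmf)
  also have "measure_pmf.prob (pair_pmf M N) \<dots>
      = measure_pmf.prob M (A \<inter> set_pmf M) * measure_pmf.prob N (B \<inter> set_pmf N)"
    by (intro measure_pmf_prob_product) auto
  finally show ?thesis by (simp add: measure_Int_set_pmf)
qed

definition determined_by :: "'i set \<Rightarrow> (('i \<Rightarrow> bool) \<Rightarrow> bool) \<Rightarrow> bool" where
  "determined_by J Q \<longleftrightarrow> (\<forall>\<omega>. Q (restrict \<omega> J) = Q \<omega>)"

lemma determined_by_mono: "determined_by J' Q \<Longrightarrow> J' \<subseteq> J \<Longrightarrow> determined_by J Q"
  unfolding determined_by_def by (metis Int_absorb1 inf_commute restrict_restrict)

lemma determined_by_conj:
  "determined_by J P \<Longrightarrow> determined_by J Q \<Longrightarrow> determined_by J (\<lambda>\<omega>. P \<omega> \<and> Q \<omega>)"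
  unfolding determined_by_def by simp

lemma determined_by_not: "determined_by J P \<Longrightarrow> determined_by J (\<lambda>\<omega>. \<not> P \<omega>)"
  unfolding determined_by_def by simp

lemma determined_by_Ball:
  "(\<And>v. v \<in> W \<Longrightarrow> determined_by J (P v)) \<Longrightarrow> determined_by J (\<lambda>\<omega>. \<forall>v\<in>W. P v \<omega>)"
  unfolding determined_by_def by simp

lemma sets_perc_measure_determined_by:
  assumes "finite J" "J \<subseteq> I" "determined_by J Q"
  shows "{\<omega>\<in>space (perc_measure I q). Q \<omega>} \<in> sets (perc_measure I q)"
proof -
  define X where "X = {f\<in>space (perc_measure J q). Q f}"
  have X: "X \<in> sets (perc_measure J q)"
    unfolding X_def using assms(1) by (intro sets_perc_measure_finite) auto
  have m: "(\<lambda>\<omega>. restrict \<omega> J) \<in> measurable (perc_measure I q) (perc_measure J q)"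
    unfolding perc_measure_def using assms(2) by (rule measurable_restrict_subset)
  have "(\<lambda>\<omega>. restrict \<omega> J) -` X \<inter> space (perc_measure I q) = {\<omega>\<in>space (perc_measure I q). Q \<omega>}"
    using assms(3) unfolding X_def determined_by_def by (auto simp: space_perc_measure)
  with measurable_sets[OF m X] show ?thesis by simp
qed

lemma prob_perc_measure_not:
  assumes "finite J" "J \<subseteq> I" "determined_by J Q"
  shows "measure (perc_measure I q) {\<omega>\<in>space (perc_measure I q). \<not> Q \<omega>}
       = 1 - measure (perc_measure I q) {\<omega>\<in>space (perc_measure I q). Q \<omega>}"
proof -
  interpret prob_space "perc_measure I q" by (rule prob_space_perc_measure)
  have "{\<omega>\<in>space (perc_measure I q). \<not> Q \<omega>}
      = space (perc_measure I q) - {\<omega>\<in>space (perc_measure I q). Q \<omega>}" by auto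
  thus ?thesis using prob_compl[OF sets_perc_measure_determined_by[OF assms]] by simp
qed

lemma prob_perc_measure_indep:
  assumes fin: "finite J1" "finite J2" and sub: "J1 \<subseteq> I" "J2 \<subseteq> I" and disj: "J1 \<inter> J2 = {}"
    and det: "determined_by J1 Q1" "determined_by J2 Q2"
  shows "measure (perc_measure I q) {\<omega>\<in>space (perc_measure I q). Q1 \<omega> \<and> Q2 \<omega>}
    = measure (perc_measure I q) {\<omega>\<in>space (perc_measure I q). Q1 \<omega>}
      * measure (perc_measure I q) {\<omega>\<in>space (perc_measure I q). Q2 \<omega>}"
proof -
  let ?B = "\<lambda>_. bernoulli_pmf q"
  let ?J = "J1 \<union> J2"
  define mrg where "mrg = (\<lambda>(f, g) x. if x \<in> J1 then f x else (g x :: bool))"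
  have restr: "Q1 (restrict \<omega> J1) = Q1 \<omega>" "Q2 (restrict \<omega> J2) = Q2 \<omega>" for \<omega>
    using det unfolding determined_by_def by auto
  have restrJ: "Q1 (restrict \<omega> ?J) = Q1 \<omega>" "Q2 (restrict \<omega> ?J) = Q2 \<omega>" for \<omega>
    using determined_by_mono[OF det(1), of ?J] determined_by_mono[OF det(2), of ?J]
    unfolding determined_by_def by auto
  have "measure (perc_measure I q) {\<omega>\<in>space (perc_measure I q). Q1 \<omega> \<and> Q2 \<omega>}
      = measure_pmf.prob (Pi_pmf ?J False ?B) {\<sigma>. Q1 \<sigma> \<and> Q2 \<sigma>}"
    using measure_perc_measure_restrict[of ?J I q "\<lambda>\<sigma>. Q1 \<sigma> \<and> Q2 \<sigma>"] fin sub by (simp add: restrJ)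
  also have "\<dots> = measure_pmf.prob (pair_pmf (Pi_pmf J1 False ?B) (Pi_pmf J2 False ?B))
                    (mrg -` {\<sigma>. Q1 \<sigma> \<and> Q2 \<sigma>})"
    unfolding mrg_def by (subst Pi_pmf_union) (use fin disj in \<open>auto simp: measure_map_pmf\<close>)
  also have "mrg -` {\<sigma>. Q1 \<sigma> \<and> Q2 \<sigma>} = {f. Q1 f} \<times> {g. Q2 g}"
  proof -
    have "restrict (mrg (f, g)) J1 = restrict f J1" "restrict (mrg (f, g)) J2 = restrict g J2" for f g
      using disj by (auto simp: mrg_def restrict_def fun_eq_iff)
    hence "Q1 (mrg fg) = Q1 (fst fg) \<and> Q2 (mrg fg) = Q2 (snd fg)" for fg
      by (metis restr prod.collapse)
    thus ?thesis by (auto simp: mem_Times_iff)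
  qed
  also have "measure_pmf.prob (pair_pmf (Pi_pmf J1 False ?B) (Pi_pmf J2 False ?B)) \<dots>
      = measure_pmf.prob (Pi_pmf J1 False ?B) {f. Q1 f} * measure_pmf.prob (Pi_pmf J2 False ?B) {g. Q2 g}"
    by (rule measure_pmf_prob_pair_times)
  also have "\<dots> = measure (perc_measure I q) {\<omega>\<in>space (perc_measure I q). Q1 \<omega>}
      * measure (perc_measure I q) {\<omega>\<in>space (perc_measure I q). Q2 \<omega>}"
    using measure_perc_measure_restrict[of J1 I q Q1] measure_perc_measure_restrict[of J2 I q Q2]
      fin sub restr by simp
  finally show ?thesis .
qed

subsection \<open>Monotonicity of increasing events\<close>

definition upset :: "('i \<Rightarrow> bool) set \<Rightarrow> bool" where
  "upset U \<longleftrightarrow> (\<forall>f g. f \<in> U \<longrightarrow> (\<forall>x. f x \<longrightarrow> g x) \<longrightarrow> g \<in> U)"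

lemma prob_Pi_pmf_bernoulli_insert:
  assumes "finite A" "x \<notin> A" "0 \<le> r" "r \<le> 1"
  shows "measure_pmf.prob (Pi_pmf (insert x A) False (\<lambda>_. bernoulli_pmf r)) U
     = r * measure_pmf.prob (Pi_pmf A False (\<lambda>_. bernoulli_pmf r)) {f. f(x:=True) \<in> U}
       + (1 - r) * measure_pmf.prob (Pi_pmf A False (\<lambda>_. bernoulli_pmf r)) {f. f(x:=False) \<in> U}"
proof -
  let ?P = "Pi_pmf A False (\<lambda>_. bernoulli_pmf r)"
  have "measure_pmf.prob (Pi_pmf (insert x A) False (\<lambda>_. bernoulli_pmf r)) U
      = measure_pmf.prob (pair_pmf (bernoulli_pmf r) ?P) ((\<lambda>(y,f). f(x:=y)) -` U)"
    using assms by (subst Pi_pmf_insert) (auto simp: measure_map_pmf)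
  also have "(\<lambda>(y,f). f(x:=y)) -` U
      = ({True} \<times> {f. f(x:=True) \<in> U}) \<union> ({False} \<times> {f. f(x:=False) \<in> U})"
  proof (rule set_eqI)
    fix z :: "bool \<times> ('a \<Rightarrow> bool)"
    obtain y f where z: "z = (y, f)" by (cases z)
    show "z \<in> (\<lambda>(y,f). f(x:=y)) -` U
        \<longleftrightarrow> z \<in> ({True} \<times> {f. f(x:=True) \<in> U}) \<union> ({False} \<times> {f. f(x:=False) \<in> U})"
      unfolding z by (cases y) auto
  qed
  also have "measure_pmf.prob (pair_pmf (bernoulli_pmf r) ?P) \<dots>
     = measure_pmf.prob (pair_pmf (bernoulli_pmf r) ?P) ({True} \<times> {f. f(x:=True) \<in> U})
     + measure_pmf.prob (pair_pmf (bernoulli_pmf r) ?P) ({False} \<times> {f. f(x:=False) \<in> U})"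
    by (intro measure_pmf.finite_measure_Union) auto
  also have "\<dots> = r * measure_pmf.prob ?P {f. f(x:=True) \<in> U}
                  + (1 - r) * measure_pmf.prob ?P {f. f(x:=False) \<in> U}"
    using assms by (simp add: measure_pmf_prob_pair_times measure_pmf_single)
  finally show ?thesis .
qed

lemma prob_Pi_pmf_bernoulli_upset_mono:
  assumes "finite A" "upset U" "0 \<le> q" "q \<le> q'" "q' \<le> 1"
  shows "measure_pmf.prob (Pi_pmf A False (\<lambda>_. bernoulli_pmf q)) U
       \<le> measure_pmf.prob (Pi_pmf A False (\<lambda>_. bernoulli_pmf q')) U"
  using assms(1,2)
proof (induction A arbitrary: U rule: finite_induct)
  case empty
  thus ?case by simp
next
  case (insert x A)
  let ?pr = "\<lambda>r y. measure_pmf.prob (Pi_pmf A False (\<lambda>_. bernoulli_pmf r)) {f. f(x:=y) \<in> U}"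
  have up: "upset {f. f(x:=y) \<in> U}" for y
    using insert.prems unfolding upset_def by (metis (mono_tags, lifting) fun_upd_apply mem_Collect_eq)
  have "f(x:=True) \<in> U" if "f(x:=False) \<in> U" for f
    using insert.prems that unfolding upset_def by (metis (full_types) fun_upd_apply)
  hence "{f. f(x:=False) \<in> U} \<subseteq> {f. f(x:=True) \<in> U}" by blast
  hence "?pr q' False \<le> ?pr q' True"
    by (intro measure_pmf.finite_measure_mono) auto
  moreover have "?pr q y \<le> ?pr q' y" for y
    using insert.IH[OF up] .
  ultimately have "q * ?pr q True \<le> q * ?pr q' True" "(1 - q) * ?pr q False \<le> (1 - q) * ?pr q' False"
    "q * (?pr q' True - ?pr q' False) \<le> q' * (?pr q' True - ?pr q' False)"
    using assms(3-5) by (auto intro!: mult_left_mono mult_right_mono)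
  hence "q * ?pr q True + (1 - q) * ?pr q False \<le> q' * ?pr q' True + (1 - q') * ?pr q' False"
    by (simp add: algebra_simps)
  thus ?case
    using prob_Pi_pmf_bernoulli_insert[OF insert.hyps, of q U]
      prob_Pi_pmf_bernoulli_insert[OF insert.hyps, of q' U] assms(3-5) by simp
qed

lemma T3_Cons: "x # xs \<in> T3 \<longleftrightarrow> x < 3 \<and> (\<forall>i\<in>set xs. i < 2)"
  by (simp add: T3_def)

lemma T3_Nil [simp]: "[] \<in> T3"
  by (simp add: T3_def)

lemma T3_take: "v \<in> T3 \<Longrightarrow> take k v \<in> T3"
  by (cases v; cases k) (auto simp: T3_Cons dest: in_set_takeD)

lemma T3_butlast: "v \<in> T3 \<Longrightarrow> butlast v \<in> T3"
  by (simp add: butlast_conv_take T3_take)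

lemma T3_set: "v \<in> T3 \<Longrightarrow> set v \<subseteq> {..<3}"
  by (cases v) (auto simp: T3_Cons)

lemma finite_T3_length_le: "finite {v\<in>T3. length v \<le> L}"
proof -
  have "{v\<in>T3. length v \<le> L} \<subseteq> {v. set v \<subseteq> {..<3} \<and> length v \<le> L}"
    using T3_set by auto
  thus ?thesis by (rule finite_subset) (intro finite_lists_length_le, simp)
qed

lemma T3_append_iff: "r \<in> T3 \<Longrightarrow> r \<noteq> [] \<Longrightarrow> r @ s \<in> T3 \<longleftrightarrow> set s \<subseteq> {..<2}"
  by (cases r) (auto simp: T3_Cons)

lemma T3_snoc: "t \<in> T3 \<Longrightarrow> t \<noteq> [] \<Longrightarrow> c \<in> {0, 1} \<Longrightarrow> t @ [c] \<in> T3"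
  using T3_append_iff[of t "[c]"] by auto

lemma card_T3_extensions:
  assumes "r \<in> T3"
  shows "finite {s. length s = m \<and> r @ s \<in> T3}" and "card {s. length s = m \<and> r @ s \<in> T3} \<le> 3 * 2 ^ m"
proof -
  let ?S = "{s. length s = m \<and> r @ s \<in> T3}"
  have "finite ?S \<and> card ?S \<le> 3 * 2 ^ m"
  proof (cases "r = [] \<and> m \<noteq> 0")
    case False
    hence "?S \<subseteq> {s. set s \<subseteq> {..<2} \<and> length s = m}"
      using T3_append_iff[OF assms] by auto
    moreover have "card {s. set s \<subseteq> {..<2::nat} \<and> length s = m} \<le> 3 * 2 ^ m"
      by (simp add: card_lists_length_eq)
    moreover have "finite {s. set s \<subseteq> {..<2::nat} \<and> length s = m}"
      by (simp add: finite_lists_length_eq)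
    ultimately show ?thesis
      by (meson card_mono finite_subset le_trans)
  next
    case True
    then obtain m' where m: "m = Suc m'" and r: "r = []" by (cases m) auto
    let ?C = "{..<3::nat} \<times> {s. set s \<subseteq> {..<2::nat} \<and> length s = m'}"
    have sub: "?S \<subseteq> (\<lambda>(x, xs). x # xs) ` ?C"
    proof
      fix s assume "s \<in> ?S"
      then obtain x xs where "s = x # xs" "length xs = m'" "x < 3" "set xs \<subseteq> {..<2}"
        using r m by (cases s) (auto simp: T3_Cons)
      thus "s \<in> (\<lambda>(x, xs). x # xs) ` ?C" by force
    qed
    have fin: "finite ?C" by (simp add: finite_lists_length_eq)
    have "card ?S \<le> card ((\<lambda>(x, xs). x # xs) ` ?C)"
      by (rule card_mono[OF finite_imageI[OF fin] sub])
    also have "\<dots> \<le> card ?C"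
      by (rule card_image_le[OF fin])
    also have "card ?C = 3 * 2 ^ m'" by (simp add: card_cartesian_product card_lists_length_eq)
    finally show ?thesis using finite_subset[OF sub finite_imageI[OF fin]] m by simp
  qed
  thus "finite ?S" "card ?S \<le> 3 * 2 ^ m" by auto
qed

lemma conn_refl [simp]: "conn ends S x x"
  by (simp add: conn_def)

lemma conn_trans: "conn ends S x y \<Longrightarrow> conn ends S y z \<Longrightarrow> conn ends S x z"
  unfolding conn_def by (rule rtranclp_trans)

lemma conn_sym: "conn ends S x y \<Longrightarrow> conn ends S y x"
proof -
  have "symp (\<lambda>x y. \<exists>e\<in>S. ends e = (x, y) \<or> ends e = (y, x))" by (auto simp: symp_def)
  hence "symp (\<lambda>x y. \<exists>e\<in>S. ends e = (x, y) \<or> ends e = (y, x))\<^sup>*\<^sup>*" by (rule symp_rtranclp)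
  thus "conn ends S x y \<Longrightarrow> conn ends S y x" unfolding conn_def by (rule sympD)
qed

lemma conn_edge: "e \<in> S \<Longrightarrow> ends e = (x, y) \<Longrightarrow> conn ends S x y"
  unfolding conn_def by (rule r_into_rtranclp) blast

lemma conn_empty: "conn ends {} x y \<Longrightarrow> x = y"
  unfolding conn_def by (induction rule: rtranclp_induct) blast+

lemma conn_mono:
  assumes "S \<subseteq> S'"
  shows "conn ends S x y \<Longrightarrow> conn ends S' x y"
  unfolding conn_def
  by (induction rule: rtranclp_induct) (use assms in \<open>auto intro: rtranclp.rtrancl_into_rtrancl\<close>)

lemma finite_pigeonhole_antimono:
  fixes Q :: "'a \<Rightarrow> nat \<Rightarrow> bool"
  assumes "finite F" and "\<And>L. \<exists>r\<in>F. Q r L" and "\<And>r L L'. Q r L \<Longrightarrow> L' \<le> L \<Longrightarrow> Q r L'"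
  shows "\<exists>r\<in>F. \<forall>L. Q r L"
proof (rule ccontr)
  assume "\<not> ?thesis"
  then obtain f where f: "\<forall>r\<in>F. \<not> Q r (f r)" by metis
  obtain r where r: "r \<in> F" "Q r (Max (f ` F))" using assms(2) by blast
  have "f r \<le> Max (f ` F)" using assms(1) r(1) by auto
  thus False using assms(3) f r by blast
qed

section \<open>Infinite clusters of \<open>\<Gamma>\<^sub>D\<close> and crossed copies\<close>

locale tree_like_graph =
  fixes V :: "nat \<Rightarrow> 'v set" and E :: "nat \<Rightarrow> 'e set" and ends :: "nat \<Rightarrow> 'e \<Rightarrow> 'v \<times> 'v"
    and a b :: "nat \<Rightarrow> 'v"
  assumes ends_in: "\<And>n e. e \<in> E n \<Longrightarrow> fst (ends n e) \<in> V n \<and> snd (ends n e) \<in> V n"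
    and a_ne_b: "\<And>n. a n \<noteq> b n"
    and finite_V: "\<And>n. finite (V n)"
begin

text \<open>An edge of \<open>\<Gamma>\<^sub>D\<close> is a pair \<open>(v, e)\<close>: the edge \<open>e\<close> of the copy \<open>D\<^sub>v\<close> of \<open>D\<^bsub>|v|\<^esub>\<close> that replaces
  the tree edge ending in \<open>v\<close>.\<close>

definition copy_conn :: "(nat list \<times> 'e \<Rightarrow> bool) \<Rightarrow> nat list \<Rightarrow> 'v \<Rightarrow> 'v \<Rightarrow> bool" where
  "copy_conn \<omega> v = conn (ends (length v)) {e \<in> E (length v). \<omega> (v, e)}"

definition crossed :: "(nat list \<times> 'e \<Rightarrow> bool) \<Rightarrow> nat list \<Rightarrow> bool" where
  "crossed \<omega> v \<longleftrightarrow> copy_conn \<omega> v (a (length v)) (b (length v))"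

definition Gamma_conn ::
    "(nat list \<times> 'e \<Rightarrow> bool) \<Rightarrow> nat list + nat list \<times> 'v \<Rightarrow> nat list + nat list \<times> 'v \<Rightarrow> bool" where
  "Gamma_conn \<omega> = conn (Gamma_ends ends a b) {e \<in> Gamma_E E. \<omega> e}"

definition crossed_tree_edge :: "(nat list \<times> 'e \<Rightarrow> bool) \<Rightarrow> nat list \<Rightarrow> nat list \<Rightarrow> bool" where
  "crossed_tree_edge \<omega> x y \<longleftrightarrow>
     (y \<in> T3 \<and> y \<noteq> [] \<and> x = butlast y \<and> crossed \<omega> y) \<or> (x \<in> T3 \<and> x \<noteq> [] \<and> y = butlast x \<and> crossed \<omega> x)"

definition crossed_below :: "(nat list \<times> 'e \<Rightarrow> bool) \<Rightarrow> nat list \<Rightarrow> nat list \<Rightarrow> bool" where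
  "crossed_below \<omega> r w \<longleftrightarrow>
     (\<exists>s. w = r @ s \<and> w \<in> T3 \<and> (\<forall>k\<in>{1..length s}. crossed \<omega> (r @ take k s)))"

definition crossed_descent :: "(nat list \<times> 'e \<Rightarrow> bool) \<Rightarrow> nat list \<Rightarrow> nat \<Rightarrow> bool" where
  "crossed_descent \<omega> r m \<longleftrightarrow>
     (\<exists>s. length s = m \<and> r @ s \<in> T3 \<and> (\<forall>k\<in>{1..m}. crossed \<omega> (r @ take k s)))"

lemma copy_conn_refl [simp]: "copy_conn \<omega> v x x"
  by (simp add: copy_conn_def)

lemma copy_conn_sym: "copy_conn \<omega> v x y \<Longrightarrow> copy_conn \<omega> v y x"
  unfolding copy_conn_def by (rule conn_sym)

lemma copy_conn_trans: "copy_conn \<omega> v x y \<Longrightarrow> copy_conn \<omega> v y z \<Longrightarrow> copy_conn \<omega> v x z"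
  unfolding copy_conn_def by (rule conn_trans)

lemma copy_conn_edge:
  "e \<in> E (length v) \<Longrightarrow> \<omega> (v, e) \<Longrightarrow> copy_conn \<omega> v (fst (ends (length v) e)) (snd (ends (length v) e))"
  unfolding copy_conn_def by (rule conn_edge[where e=e]) auto

lemma Gamma_ends_Pair:
  "Gamma_ends ends a b (v, e) = (gmap a b v (fst (ends (length v) e)), gmap a b v (snd (ends (length v) e)))"
  by (simp add: Gamma_ends_def)

lemma mem_Gamma_E: "(v, e) \<in> Gamma_E E \<longleftrightarrow> v \<in> T3 \<and> v \<noteq> [] \<and> e \<in> E (length v)"
  by (simp add: Gamma_E_def)

lemma gmap_a: "gmap a b v (a (length v)) = Inl (butlast v)"
  by (simp add: gmap_def)

lemma gmap_b: "gmap a b v (b (length v)) = Inl v"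
  using a_ne_b[of "length v"] by (simp add: gmap_def)

lemma Gamma_conn_gmap:
  assumes v: "v \<in> T3" "v \<noteq> []" and c: "copy_conn \<omega> v x y"
  shows "Gamma_conn \<omega> (gmap a b v x) (gmap a b v y)"
  using c unfolding copy_conn_def conn_def[of "ends (length v)"]
proof (induction rule: rtranclp_induct)
  case base show ?case by (simp add: Gamma_conn_def)
next
  case (step y z)
  then obtain e where e: "e \<in> E (length v)" "\<omega> (v, e)"
    "ends (length v) e = (y, z) \<or> ends (length v) e = (z, y)" by blast
  have ge: "(v, e) \<in> {e \<in> Gamma_E E. \<omega> e}" using e v by (simp add: mem_Gamma_E)
  have "Gamma_conn \<omega> (gmap a b v y) (gmap a b v z)"
    using e(3) conn_edge[OF ge, of "Gamma_ends ends a b"] conn_sym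
    unfolding Gamma_conn_def by (fastforce simp: Gamma_ends_Pair)
  with step.IH show ?case unfolding Gamma_conn_def by (rule conn_trans)
qed

lemma Gamma_conn_crossed:
  "v \<in> T3 \<Longrightarrow> v \<noteq> [] \<Longrightarrow> crossed \<omega> v \<Longrightarrow> Gamma_conn \<omega> (Inl (butlast v)) (Inl v)"
  using Gamma_conn_gmap[of v \<omega> "a (length v)" "b (length v)"] unfolding crossed_def gmap_a gmap_b by simp

lemma Gamma_conn_crossed_descent:
  assumes "length s = m" "r @ s \<in> T3" "\<forall>k\<in>{1..m}. crossed \<omega> (r @ take k s)"
  shows "Gamma_conn \<omega> (Inl r) (Inl (r @ s))"
proof -
  have "k \<le> m \<Longrightarrow> Gamma_conn \<omega> (Inl r) (Inl (r @ take k s))" for k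
  proof (induction k)
    case 0 show ?case by (simp add: Gamma_conn_def)
  next
    case (Suc k)
    define v where "v = r @ take (Suc k) s"
    have "v \<in> T3" unfolding v_def using T3_take[OF assms(2), of "length r + Suc k"] by simp
    moreover have tn: "take (Suc k) s \<noteq> []" using Suc.prems assms(1) by (cases s) auto
    hence "v \<noteq> []" by (simp add: v_def)
    moreover have "butlast v = r @ take k s"
      unfolding v_def using Suc.prems assms(1) tn by (simp add: butlast_append butlast_take)
    moreover have "crossed \<omega> v" unfolding v_def using assms(3) Suc.prems by auto
    ultimately have "Gamma_conn \<omega> (Inl (r @ take k s)) (Inl v)" using Gamma_conn_crossed by metis
    with Suc show ?case unfolding Gamma_conn_def v_def by (auto intro: conn_trans)
  qed
  from this[of m] show ?thesis using assms(1) by simp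
qed

lemma infinite_cluster_if_crossed_descent:
  assumes "\<forall>m. crossed_descent \<omega> r m"
  shows "infinite {y. Gamma_conn \<omega> (Inl r) y}"
proof
  assume fin: "finite {y. Gamma_conn \<omega> (Inl r) y}"
  define depth where "depth = (\<lambda>y :: nat list + (nat list \<times> 'v). case y of Inl w \<Rightarrow> length w | Inr _ \<Rightarrow> 0)"
  obtain B where B: "\<forall>x\<in>depth ` {y. Gamma_conn \<omega> (Inl r) y}. x \<le> B"
    using finite_nat_set_iff_bounded_le fin by blast
  obtain s where s: "length s = Suc B" "r @ s \<in> T3" "\<forall>k\<in>{1..Suc B}. crossed \<omega> (r @ take k s)"
    using assms unfolding crossed_descent_def by blast
  have "depth (Inl (r @ s)) \<le> B" using B Gamma_conn_crossed_descent[OF s] by blast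
  thus False using s(1) by (simp add: depth_def)
qed

text \<open>The cluster of a tree vertex \<open>t\<close> can only use tree vertices reachable from \<open>t\<close> through crossed
  copies, together with inner vertices of copies attached to them.\<close>

definition copy_reach :: "(nat list \<times> 'e \<Rightarrow> bool) \<Rightarrow> nat list \<Rightarrow> nat list \<Rightarrow> 'v \<Rightarrow> bool" where
  "copy_reach \<omega> t v w \<longleftrightarrow>
     (copy_conn \<omega> v (a (length v)) w \<and> (crossed_tree_edge \<omega>)\<^sup>*\<^sup>* t (butlast v)) \<or>
     (copy_conn \<omega> v (b (length v)) w \<and> (crossed_tree_edge \<omega>)\<^sup>*\<^sup>* t v)"

definition collapsed_reach :: "(nat list \<times> 'e \<Rightarrow> bool) \<Rightarrow> nat list \<Rightarrow> nat list + (nat list \<times> 'v) \<Rightarrow> bool" where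
  "collapsed_reach \<omega> t y \<longleftrightarrow>
     (\<exists>t'. y = Inl t' \<and> t' \<in> T3 \<and> (crossed_tree_edge \<omega>)\<^sup>*\<^sup>* t t') \<or>
     (\<exists>v z. y = Inr (v, z) \<and> v \<in> T3 \<and> v \<noteq> [] \<and> z \<in> V (length v) \<and> copy_reach \<omega> t v z)"

lemma copy_reach_trans: "copy_reach \<omega> t v w \<Longrightarrow> copy_conn \<omega> v w w' \<Longrightarrow> copy_reach \<omega> t v w'"
  unfolding copy_reach_def by (auto intro: copy_conn_trans)

lemma copy_reach_if_collapsed_reach_gmap:
  assumes "collapsed_reach \<omega> t y" "y = gmap a b v w"
  shows "copy_reach \<omega> t v w"
  using assms a_ne_b[of "length v"]
  by (auto simp: gmap_def collapsed_reach_def copy_reach_def split: if_splits)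

lemma collapsed_reach_gmap:
  assumes h: "copy_reach \<omega> t v w" and w: "w \<in> V (length v)" and v: "v \<in> T3" "v \<noteq> []"
  shows "collapsed_reach \<omega> t (gmap a b v w)"
proof -
  let ?R = "(crossed_tree_edge \<omega>)\<^sup>*\<^sup>*"
  have up: "?R t (butlast v)" if "copy_conn \<omega> v (b (length v)) (a (length v))" "?R t v"
  proof -
    have "crossed_tree_edge \<omega> v (butlast v)"
      using v that(1) copy_conn_sym by (simp add: crossed_tree_edge_def crossed_def)
    thus ?thesis using that(2) by (rule rtranclp.rtrancl_into_rtrancl[rotated])
  qed
  have down: "?R t v" if "copy_conn \<omega> v (a (length v)) (b (length v))" "?R t (butlast v)"
  proof -
    have "crossed_tree_edge \<omega> (butlast v) v"
      using v that(1) by (simp add: crossed_tree_edge_def crossed_def)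
    thus ?thesis using that(2) by (rule rtranclp.rtrancl_into_rtrancl[rotated])
  qed
  show ?thesis
    using h w v up down a_ne_b[of "length v"] T3_butlast[of v]
    by (auto simp: gmap_def collapsed_reach_def copy_reach_def)
qed

lemma collapsed_reach_if_Gamma_conn:
  assumes t: "t \<in> T3" and c: "Gamma_conn \<omega> (Inl t) y"
  shows "collapsed_reach \<omega> t y"
  using c unfolding Gamma_conn_def conn_def
proof (induction rule: rtranclp_induct)
  case base thus ?case using t by (simp add: collapsed_reach_def)
next
  case (step y y')
  then obtain ge where "ge \<in> Gamma_E E" "\<omega> ge"
     "Gamma_ends ends a b ge = (y, y') \<or> Gamma_ends ends a b ge = (y', y)" by blast
  moreover obtain v e where "ge = (v, e)" by (cases ge)
  ultimately have ve: "(v, e) \<in> Gamma_E E" "\<omega> (v, e)"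
     "Gamma_ends ends a b (v, e) = (y, y') \<or> Gamma_ends ends a b (v, e) = (y', y)" by auto
  have v: "v \<in> T3" "v \<noteq> []" "e \<in> E (length v)" using ve(1) by (auto simp: mem_Gamma_E)
  define x1 where "x1 = fst (ends (length v) e)"
  define x2 where "x2 = snd (ends (length v) e)"
  have xV: "x1 \<in> V (length v)" "x2 \<in> V (length v)"
    using ends_in[OF v(3)] by (auto simp: x1_def x2_def)
  have "copy_conn \<omega> v x1 x2" unfolding x1_def x2_def by (rule copy_conn_edge) (use v ve in auto)
  moreover have "(y, y') = (gmap a b v x1, gmap a b v x2) \<or> (y', y) = (gmap a b v x1, gmap a b v x2)"
    using ve(3) by (auto simp: Gamma_ends_Pair x1_def x2_def)
  ultimately obtain w w' where "y = gmap a b v w" "y' = gmap a b v w'" "copy_conn \<omega> v w w'" "w' \<in> V (length v)"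
    using xV copy_conn_sym by blast
  thus ?case
    using copy_reach_if_collapsed_reach_gmap[OF step.IH] copy_reach_trans collapsed_reach_gmap v by blast
qed

lemma finite_cluster_if_bounded:
  assumes t: "t \<in> T3" and L: "\<And>t'. (crossed_tree_edge \<omega>)\<^sup>*\<^sup>* t t' \<Longrightarrow> length t' \<le> L"
  shows "finite {y. Gamma_conn \<omega> (Inl t) y}"
proof -
  define B where "B = {w\<in>T3. length w \<le> Suc L}"
  define Z where "Z = (\<Union>n\<le>Suc L. V n)"
  have "{y. Gamma_conn \<omega> (Inl t) y} \<subseteq> Inl ` B \<union> Inr ` (B \<times> Z)"
  proof
    fix y assume "y \<in> {y. Gamma_conn \<omega> (Inl t) y}"
    hence I: "collapsed_reach \<omega> t y" using collapsed_reach_if_Gamma_conn[OF t] by simp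
    show "y \<in> Inl ` B \<union> Inr ` (B \<times> Z)"
    proof (cases y)
      case (Inl t')
      thus ?thesis using I L by (force simp: collapsed_reach_def B_def)
    next
      case (Inr vz)
      then obtain v z where y: "y = Inr (v, z)" by (cases vz) auto
      hence vz: "v \<in> T3" "z \<in> V (length v)" "copy_reach \<omega> t v z"
        using I by (auto simp: collapsed_reach_def)
      have "length v \<le> Suc L"
        using vz(3) L[of v] L[of "butlast v"] unfolding copy_reach_def by fastforce
      hence "v \<in> B" "z \<in> Z" using vz by (auto simp: B_def Z_def)
      thus ?thesis using y by blast
    qed
  qed
  moreover have "finite B" unfolding B_def by (rule finite_T3_length_le)
  moreover have "finite Z" unfolding Z_def using finite_V by auto
  ultimately show ?thesis by (meson finite_SigmaI finite_UnI finite_imageI finite_subset)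
qed

lemma Gamma_conn_Inr_cases:
  assumes z: "z \<in> V (length v)" and c: "Gamma_conn \<omega> (Inr (v, z)) y"
  shows "(\<exists>t\<in>T3. Gamma_conn \<omega> (Inr (v, z)) (Inl t)) \<or> (\<exists>z'\<in>V (length v). y = Inr (v, z'))"
  using c unfolding Gamma_conn_def conn_def
proof (induction rule: rtranclp_induct)
  case base thus ?case using z by auto
next
  case (step y y')
  let ?R = "\<lambda>x y. \<exists>e\<in>{e \<in> Gamma_E E. \<omega> e}. Gamma_ends ends a b e = (x, y) \<or> Gamma_ends ends a b e = (y, x)"
  show ?case
  proof (cases "\<exists>t\<in>T3. ?R\<^sup>*\<^sup>* (Inr (v, z)) (Inl t)")
    case True thus ?thesis by blast
  next
    case False
    then obtain z' where y: "y = Inr (v, z')" using step.IH by blast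
    obtain ge where ge: "ge \<in> Gamma_E E" "\<omega> ge"
      "Gamma_ends ends a b ge = (y, y') \<or> Gamma_ends ends a b ge = (y', y)" using step.hyps(2) by blast
    obtain v' e where gv: "ge = (v', e)" by (cases ge)
    have v': "v' \<in> T3" "v' \<noteq> []" "e \<in> E (length v')" using ge(1) gv by (auto simp: mem_Gamma_E)
    obtain w1 w2 where w: "y = gmap a b v' w1" "y' = gmap a b v' w2" "w2 \<in> V (length v')"
      using ge(3) ends_in[OF v'(3)] unfolding gv Gamma_ends_Pair by auto
    have "v' = v" using w(1) y by (auto simp: gmap_def split: if_splits)
    have reach: "?R\<^sup>*\<^sup>* (Inr (v, z)) y'"
      using step.hyps by (rule rtranclp.rtrancl_into_rtrancl)
    show ?thesis
    proof (cases "w2 = a (length v') \<or> w2 = b (length v')")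
      case True
      hence "y' = Inl (butlast v') \<or> y' = Inl v'" using w(2) by (auto simp: gmap_def)
      thus ?thesis using reach v' T3_butlast by blast
    next
      case False
      hence "y' = Inr (v, w2)" using w(2) \<open>v' = v\<close> by (simp add: gmap_def)
      thus ?thesis using w(3) \<open>v' = v\<close> by blast
    qed
  qed
qed

lemma infinite_cluster_meets_T3:
  assumes x: "x \<in> Gamma_V V a b" and inf: "infinite {y. Gamma_conn \<omega> x y}"
  shows "\<exists>t\<in>T3. Gamma_conn \<omega> x (Inl t)"
proof (cases x)
  case (Inl t)
  thus ?thesis using x by (auto simp: Gamma_V_def Gamma_conn_def intro!: bexI[where x=t])
next
  case (Inr vz)
  then obtain v z where xv: "x = Inr (v, z)" "z \<in> V (length v)"
    using x by (auto simp: Gamma_V_def)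
  show ?thesis
  proof (rule ccontr)
    assume "\<not> ?thesis"
    hence "{y. Gamma_conn \<omega> x y} \<subseteq> Inr ` ({v} \<times> V (length v))"
      using Gamma_conn_Inr_cases[OF xv(2)] xv(1) by blast
    hence "finite {y. Gamma_conn \<omega> x y}" by (rule finite_subset) (use finite_V in auto)
    thus False using inf by simp
  qed
qed

lemma crossed_below_refl: "t \<in> T3 \<Longrightarrow> crossed_below \<omega> t t"
  unfolding crossed_below_def by (intro exI[of _ "[]"]) auto

lemma crossed_below_child:
  assumes "crossed_below \<omega> r y" "y' \<in> T3" "y' \<noteq> []" "y = butlast y'" "crossed \<omega> y'"
  shows "crossed_below \<omega> r y'"
proof -
  obtain s where s: "y = r @ s" "\<forall>k\<in>{1..length s}. crossed \<omega> (r @ take k s)"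
    using assms(1) unfolding crossed_below_def by blast
  have y': "y' = r @ (s @ [last y'])" using assms(3,4) s(1) by (metis append_assoc append_butlast_last_id)
  have "crossed \<omega> (r @ take k (s @ [last y']))" if "k \<in> {1..Suc (length s)}" for k
  proof (cases "k \<le> length s")
    case True thus ?thesis using s(2) that by auto
  next
    case False
    hence "r @ take k (s @ [last y']) = y'" using that y' by simp
    thus ?thesis using assms(5) by simp
  qed
  thus ?thesis unfolding crossed_below_def using y' assms(2) by (intro exI[of _ "s @ [last y']"]) auto
qed

lemma crossed_below_parent:
  assumes "crossed_below \<omega> r y" "y \<noteq> r"
  shows "crossed_below \<omega> r (butlast y)"
proof -
  obtain s where s: "y = r @ s" "y \<in> T3" "\<forall>k\<in>{1..length s}. crossed \<omega> (r @ take k s)"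
    using assms(1) unfolding crossed_below_def by blast
  have "s \<noteq> []" using s(1) assms(2) by auto
  hence "butlast y = r @ butlast s" "\<forall>k\<in>{1..length (butlast s)}. take k (butlast s) = take k s"
    using s(1) by (auto simp: butlast_append take_butlast)
  moreover have "butlast y \<in> T3" using s(2) by (rule T3_butlast)
  ultimately show ?thesis using s(3) unfolding crossed_below_def by (intro exI[of _ "butlast s"]) auto
qed

lemma crossed_below_grandparent:
  assumes "crossed_below \<omega> r t" "r \<noteq> []" "crossed \<omega> r"
  shows "crossed_below \<omega> (butlast r) t"
proof -
  obtain s where s: "t = r @ s" "t \<in> T3" "\<forall>k\<in>{1..length s}. crossed \<omega> (r @ take k s)"
    using assms(1) unfolding crossed_below_def by blast
  have r: "r = butlast r @ [last r]" using assms(2) by simp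
  have eq: "butlast r @ take (Suc k) (last r # s) = r @ take k s" for k
    by (subst (3) r) simp
  have "crossed \<omega> (butlast r @ take k (last r # s))" if k: "k \<in> {1..Suc (length s)}" for k
  proof -
    obtain k' where k: "k = Suc k'" "k' \<le> length s" using k by (cases k) auto
    show ?thesis using s(3) k assms(3) unfolding k(1) eq by (cases "k' = 0") auto
  qed
  moreover have "t = butlast r @ last r # s" using eq[of "length s"] s(1) by simp
  ultimately show ?thesis unfolding crossed_below_def using s(2)
    by (intro exI[of _ "last r # s"]) auto
qed

lemma crossed_tree_path_common_ancestor:
  assumes t: "t \<in> T3" and c: "(crossed_tree_edge \<omega>)\<^sup>*\<^sup>* t t'"
  shows "\<exists>r. crossed_below \<omega> r t \<and> crossed_below \<omega> r t'"
  using c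
proof (induction rule: rtranclp_induct)
  case base thus ?case using crossed_below_refl[OF t] by blast
next
  case (step y y')
  then obtain r where r: "crossed_below \<omega> r t" "crossed_below \<omega> r y" by blast
  consider "y' \<in> T3" "y' \<noteq> []" "y = butlast y'" "crossed \<omega> y'"
    | "y \<noteq> []" "y' = butlast y" "crossed \<omega> y"
    using step.hyps(2) unfolding crossed_tree_edge_def by auto
  thus ?case
  proof cases
    case 1 thus ?thesis using r crossed_below_child by blast
  next
    case 2
    show ?thesis
    proof (cases "y = r")
      case True
      have "y \<in> T3" using r(2) by (auto simp: crossed_below_def)
      hence "crossed_below \<omega> (butlast r) y'" using 2 True by (simp add: T3_butlast crossed_below_refl)
      moreover have "crossed_below \<omega> (butlast r) t" using 2 True r(1) by (simp add: crossed_below_grandparent)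
      ultimately show ?thesis by blast
    next
      case False
      thus ?thesis using 2 r crossed_below_parent by blast
    qed
  qed
qed

lemma crossed_descent_if_crossed_below:
  assumes d: "crossed_below \<omega> r w" and len: "length r + m \<le> length w"
  shows "crossed_descent \<omega> r m"
proof -
  obtain s where s: "w = r @ s" "w \<in> T3" "\<forall>k\<in>{1..length s}. crossed \<omega> (r @ take k s)"
    using d unfolding crossed_below_def by blast
  have m: "m \<le> length s" using len s(1) by simp
  have "r @ take m s = take (length r + m) w" using s(1) by simp
  hence "r @ take m s \<in> T3" using T3_take[OF s(2)] by simp
  moreover have "\<forall>k\<in>{1..m}. take k (take m s) = take k s" by (simp add: min_def)
  ultimately show ?thesis unfolding crossed_descent_def using s(3) m
    by (intro exI[of _ "take m s"]) auto
qed

lemma crossed_descent_Suc_imp: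
  assumes "crossed_descent \<omega> r (Suc m)"
  shows "crossed_descent \<omega> r m"
proof -
  obtain s where "length s = Suc m" "r @ s \<in> T3" "\<forall>k\<in>{1..Suc m}. crossed \<omega> (r @ take k s)"
    using assms unfolding crossed_descent_def by blast
  hence "crossed_below \<omega> r (r @ s)" "length r + m \<le> length (r @ s)"
    unfolding crossed_below_def by auto
  thus ?thesis by (rule crossed_descent_if_crossed_below)
qed

lemma infinite_cluster_iff_crossed_descent:
  "(\<exists>x\<in>Gamma_V V a b. infinite {y. Gamma_conn \<omega> x y}) \<longleftrightarrow> (\<exists>r\<in>T3. \<forall>m. crossed_descent \<omega> r m)"
proof
  assume "\<exists>r\<in>T3. \<forall>m. crossed_descent \<omega> r m"
  thus "\<exists>x\<in>Gamma_V V a b. infinite {y. Gamma_conn \<omega> x y}"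
    using infinite_cluster_if_crossed_descent by (force simp: Gamma_V_def)
next
  assume "\<exists>x\<in>Gamma_V V a b. infinite {y. Gamma_conn \<omega> x y}"
  then obtain x where x: "x \<in> Gamma_V V a b" "infinite {y. Gamma_conn \<omega> x y}" by blast
  obtain t where t: "t \<in> T3" "Gamma_conn \<omega> x (Inl t)" using infinite_cluster_meets_T3[OF x] by blast
  have "{y. Gamma_conn \<omega> x y} \<subseteq> {y. Gamma_conn \<omega> (Inl t) y}"
    using t(2) unfolding Gamma_conn_def by (auto intro: conn_trans conn_sym)
  hence inf: "infinite {y. Gamma_conn \<omega> (Inl t) y}" using x(2) finite_subset by blast
  define F where "F = (\<lambda>k. take k t) ` {..length t}"
  have cover: "\<exists>r\<in>F. \<exists>w. crossed_below \<omega> r w \<and> L \<le> length w" for L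
  proof -
    obtain t' where t': "(crossed_tree_edge \<omega>)\<^sup>*\<^sup>* t t'" "L \<le> length t'"
      using finite_cluster_if_bounded[OF t(1), of \<omega> L] inf by force
    then obtain r where "crossed_below \<omega> r t" "crossed_below \<omega> r t'"
      using crossed_tree_path_common_ancestor[OF t(1)] by blast
    moreover from this(1) have "r \<in> F"
      unfolding crossed_below_def F_def by (auto intro!: image_eqI[where x="length r"])
    ultimately show ?thesis using t'(2) by blast
  qed
  have "finite F" unfolding F_def by simp
  have "\<exists>r\<in>F. \<forall>L. \<exists>w. crossed_below \<omega> r w \<and> L \<le> length w"
    by (rule finite_pigeonhole_antimono[OF \<open>finite F\<close> cover]) (meson le_trans)
  then obtain r where r: "r \<in> F" "\<forall>L. \<exists>w. crossed_below \<omega> r w \<and> L \<le> length w" by blast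
  have "r \<in> T3" using r(1) t(1) T3_take unfolding F_def by auto
  moreover have "crossed_descent \<omega> r m" for m
    using r(2) crossed_descent_if_crossed_below by blast
  ultimately show "\<exists>r\<in>T3. \<forall>m. crossed_descent \<omega> r m" by blast
qed

end

section \<open>Percolation on \<open>\<Gamma>\<^sub>D\<close>\<close>

lemma prod_le_power_if_eventually_le:
  fixes f :: "nat \<Rightarrow> real"
  assumes f: "\<And>k. 0 \<le> f k" "\<And>k. f k \<le> 1" and N: "\<And>k. N \<le> k \<Longrightarrow> f k \<le> c"
  shows "(\<Prod>k\<in>{1..m}. f (L + k)) \<le> c ^ (m - N)"
proof (induction m)
  case 0 thus ?case by simp
next
  case (Suc m)
  have eq: "(\<Prod>k\<in>{1..Suc m}. f (L + k)) = f (L + Suc m) * (\<Prod>k\<in>{1..m}. f (L + k))"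
    by (simp add: atLeastAtMostSuc_conv)
  show ?case
  proof (cases "Suc m \<le> N")
    case True
    have "(\<Prod>k\<in>{1..Suc m}. f (L + k)) \<le> 1" by (intro prod_le_1) (auto simp: f)
    thus ?thesis using True by simp
  next
    case False
    have "0 \<le> c" using f(1)[of N] N[of N] by linarith
    hence "(\<Prod>k\<in>{1..Suc m}. f (L + k)) \<le> c * c ^ (m - N)"
      unfolding eq using Suc.IH N[of "L + Suc m"] False f by (intro mult_mono) (auto simp: prod_nonneg)
    also have "\<dots> = c ^ (Suc m - N)" using False by (simp add: Suc_diff_le)
    finally show ?thesis .
  qed
qed

lemma limsup_less_imp_eventually_le:
  fixes f :: "nat \<Rightarrow> real"
  assumes "limsup (\<lambda>n. ereal (f n)) < ereal c"
  obtains d N where "d < c" "\<And>n. N \<le> n \<Longrightarrow> f n \<le> d"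
proof -
  obtain d where d: "limsup (\<lambda>n. ereal (f n)) < ereal d" "ereal d < ereal c"
    using ereal_dense2[OF assms] by blast
  have "eventually (\<lambda>n. ereal (f n) < ereal d) sequentially" by (rule Limsup_lessD[OF d(1)])
  then obtain N where "\<forall>n\<ge>N. f n < d" by (auto simp: eventually_sequentially)
  thus ?thesis using d(2) by (intro that[of d N]) auto
qed

lemma liminf_greater_imp_eventually_ge:
  fixes f :: "nat \<Rightarrow> real"
  assumes "ereal c < liminf (\<lambda>n. ereal (f n))"
  obtains d N where "c < d" "\<And>n. N < n \<Longrightarrow> d \<le> f n"
proof -
  obtain d where d: "ereal c < ereal d" "ereal d < liminf (\<lambda>n. ereal (f n))"
    using ereal_dense2[OF assms] by blast
  have "eventually (\<lambda>n. ereal d < ereal (f n)) sequentially" by (rule less_LiminfD[OF d(2)])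
  then obtain N where N: "\<forall>n\<ge>N. d < f n" by (auto simp: eventually_sequentially)
  have "d \<le> f n" if "N < n" for n using N[rule_format, of n] that by linarith
  thus ?thesis using d(1) by (intro that[of d N]) auto
qed

text \<open>\<open>(2h\<^sub>0 - 1)/h\<^sub>0\<^sup>2\<close> is the nonzero fixed point of \<open>x \<mapsto> 1 - (1 - h\<^sub>0 x)\<^sup>2\<close>.\<close>

lemma fixed_point_lower_bound:
  fixes h0 h p0 p1 :: real
  assumes h0: "1/2 < h0" "h0 \<le> h" "h \<le> 1"
    and p: "(2*h0-1)/h0^2 \<le> p0" "p0 \<le> 1" "(2*h0-1)/h0^2 \<le> p1" "p1 \<le> 1"
  shows "(2*h0-1)/h0^2 \<le> 1 - (1 - h * p0) * (1 - h * p1)"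
proof -
  define x where "x = (2*h0-1)/h0^2"
  have x0: "0 \<le> x" using h0 by (simp add: x_def)
  have a: "h0 * x \<le> h * p0" "h0 * x \<le> h * p1"
    using h0 p x0 unfolding x_def[symmetric] by (auto intro!: mult_mono)
  have b: "h * p0 \<le> 1" "h * p1 \<le> 1"
    using h0 p x0 unfolding x_def[symmetric] by (auto intro!: mult_le_one)
  have "(1 - h * p0) * (1 - h * p1) \<le> (1 - h0 * x) * (1 - h0 * x)"
    using a b by (intro mult_mono) auto
  also have "\<dots> = 1 - x" using h0 unfolding x_def by (simp add: field_simps power2_eq_square)
  finally show ?thesis unfolding x_def by simp
qed

locale tree_like_percolation = tree_like_graph V E ends a b
  for V :: "nat \<Rightarrow> 'v set" and E :: "nat \<Rightarrow> 'e set" and ends a b +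
  assumes finite_E: "\<And>n. finite (E n)"
begin

abbreviation hD :: "nat \<Rightarrow> real \<Rightarrow> real" where
  "hD n q \<equiv> h_conn (E n) (ends n) (a n) (b n) q"

abbreviation Gamma_perc :: "real \<Rightarrow> (nat list \<times> 'e \<Rightarrow> bool) measure" where
  "Gamma_perc q \<equiv> perc_measure (Gamma_E E) q"

definition copies_edges :: "nat list set \<Rightarrow> (nat list \<times> 'e) set" where
  "copies_edges W = Sigma W (\<lambda>v. E (length v))"

definition strict_descendants :: "nat list \<Rightarrow> nat \<Rightarrow> nat list set" where
  "strict_descendants r m = {w\<in>T3. \<exists>s. w = r @ s \<and> s \<noteq> [] \<and> length s \<le> m}"

lemma finite_copies_edges: "finite W \<Longrightarrow> finite (copies_edges W)"
  by (simp add: copies_edges_def finite_E)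

lemma copies_edges_subset: "W \<subseteq> T3 - {[]} \<Longrightarrow> copies_edges W \<subseteq> Gamma_E E"
  by (auto simp: copies_edges_def Gamma_E_def)

lemma finite_strict_descendants: "finite (strict_descendants r m)"
proof -
  have "strict_descendants r m \<subseteq> {w\<in>T3. length w \<le> length r + m}"
    by (auto simp: strict_descendants_def)
  thus ?thesis using finite_T3_length_le finite_subset by blast
qed

lemma strict_descendants_subset: "strict_descendants r m \<subseteq> T3 - {[]}"
  by (auto simp: strict_descendants_def)

lemma determined_by_crossed:
  assumes "v \<in> W"
  shows "determined_by (copies_edges W) (\<lambda>\<omega>. crossed \<omega> v)"
proof -
  have "{e \<in> E (length v). restrict \<omega> (copies_edges W) (v, e)} = {e \<in> E (length v). \<omega> (v, e)}" for \<omega>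
    using assms by (auto simp: copies_edges_def)
  thus ?thesis unfolding determined_by_def crossed_def copy_conn_def by simp
qed

lemma determined_by_crossed_descent:
  "determined_by (copies_edges (strict_descendants r m)) (\<lambda>\<omega>. crossed_descent \<omega> r m)"
proof -
  have "crossed (restrict \<omega> (copies_edges (strict_descendants r m))) (r @ take k s) = crossed \<omega> (r @ take k s)"
    if "length s = m" "r @ s \<in> T3" "k \<in> {1..m}" for \<omega> s k
  proof -
    have "r @ take k s \<in> strict_descendants r m"
      unfolding strict_descendants_def
      using that T3_take[OF that(2), of "length r + k"] by (cases s) auto
    thus ?thesis using determined_by_crossed unfolding determined_by_def by blast
  qed
  thus ?thesis unfolding determined_by_def crossed_descent_def by metis
qed

lemma hD_nonneg: "0 \<le> hD n q"
  by (simp add: h_conn_def)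

lemma hD_le_1: "hD n q \<le> 1"
  by (simp add: h_conn_def)

lemma prob_crossed:
  assumes v: "v \<in> T3" "v \<noteq> []"
  shows "\<P>(\<omega> in Gamma_perc q. crossed \<omega> v) = hD (length v) q"
proof -
  let ?B = "\<lambda>_. bernoulli_pmf q"
  let ?J = "copies_edges {v}"
  have det: "crossed (restrict \<sigma> ?J) v = crossed \<sigma> v" for \<sigma>
    using determined_by_crossed[of v "{v}"] unfolding determined_by_def by simp
  have "\<P>(\<omega> in Gamma_perc q. crossed \<omega> v) = measure_pmf.prob (Pi_pmf ?J False ?B) {\<sigma>. crossed \<sigma> v}"
    using measure_perc_measure_restrict[of ?J "Gamma_E E" q "\<lambda>\<sigma>. crossed \<sigma> v"]
      finite_copies_edges copies_edges_subset v by (simp add: det)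
  also have "\<dots> = measure_pmf.prob (map_pmf (\<lambda>g. g \<circ> Pair v) (Pi_pmf ?J False ?B))
          {\<tau>. conn (ends (length v)) {e \<in> E (length v). \<tau> e} (a (length v)) (b (length v))}"
    by (simp add: measure_map_pmf vimage_def crossed_def copy_conn_def)
  also have "map_pmf (\<lambda>g. g \<circ> Pair v) (Pi_pmf ?J False ?B) = Pi_pmf (E (length v)) False ?B"
    by (rule Pi_pmf_bij_betw[symmetric]) (auto simp: finite_E copies_edges_def bij_betw_def inj_on_def)
  finally show ?thesis by (simp add: h_conn_def)
qed

lemma prob_crossed_all:
  assumes "finite W" "W \<subseteq> T3 - {[]}"
  shows "\<P>(\<omega> in Gamma_perc q. \<forall>v\<in>W. crossed \<omega> v) = (\<Prod>v\<in>W. hD (length v) q)"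
  using assms
proof (induction W rule: finite_induct)
  case empty
  thus ?case using prob_space.prob_space[OF prob_space_perc_measure] by simp
next
  case (insert w W)
  have disj: "copies_edges {w} \<inter> copies_edges W = {}"
    using insert.hyps(2) by (auto simp: copies_edges_def)
  have "\<P>(\<omega> in Gamma_perc q. crossed \<omega> w \<and> (\<forall>v\<in>W. crossed \<omega> v))
      = \<P>(\<omega> in Gamma_perc q. crossed \<omega> w) * \<P>(\<omega> in Gamma_perc q. \<forall>v\<in>W. crossed \<omega> v)"
    by (rule prob_perc_measure_indep[OF finite_copies_edges finite_copies_edges copies_edges_subset
          copies_edges_subset disj determined_by_crossed determined_by_Ball[OF determined_by_crossed]])
      (use insert in auto)
  thus ?case using insert prob_crossed[of w q] by simp
qed

lemma sets_crossed_all: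
  "finite W \<Longrightarrow> W \<subseteq> T3 - {[]} \<Longrightarrow> {\<omega>\<in>space (Gamma_perc q). \<forall>v\<in>W. crossed \<omega> v} \<in> sets (Gamma_perc q)"
  by (rule sets_perc_measure_determined_by[OF finite_copies_edges copies_edges_subset
        determined_by_Ball[OF determined_by_crossed]])

lemma sets_crossed_descent: "{\<omega>\<in>space (Gamma_perc q). crossed_descent \<omega> r m} \<in> sets (Gamma_perc q)"
  by (rule sets_perc_measure_determined_by[OF finite_copies_edges[OF finite_strict_descendants]
        copies_edges_subset[OF strict_descendants_subset] determined_by_crossed_descent])

lemma crossed_path_subset:
  assumes "length s = m" "r @ s \<in> T3"
  shows "(\<lambda>k. r @ take k s) ` {1..m} \<subseteq> T3 - {[]}"
proof -
  have "r @ take k s \<in> T3" for k using T3_take[of "r @ s" "length r + k"] assms(2) by simp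
  moreover have "r @ take k s \<noteq> []" if "k \<in> {1..m}" for k using that assms(1) by (cases s) auto
  ultimately show ?thesis by auto
qed

lemma prob_crossed_path:
  assumes s: "length s = m" "r @ s \<in> T3"
  shows "\<P>(\<omega> in Gamma_perc q. \<forall>v\<in>(\<lambda>k. r @ take k s) ` {1..m}. crossed \<omega> v)
       = (\<Prod>k\<in>{1..m}. hD (length r + k) q)"
proof -
  have "inj_on (\<lambda>k. r @ take k s) {1..m}"
  proof (rule inj_onI)
    fix k k' assume k: "k \<in> {1..m}" "k' \<in> {1..m}" and "r @ take k s = r @ take k' s"
    hence "length (take k s) = length (take k' s)" by simp
    thus "k = k'" using k s by simp
  qed
  hence "(\<Prod>v\<in>(\<lambda>k. r @ take k s) ` {1..m}. hD (length v) q) = (\<Prod>k\<in>{1..m}. hD (length r + k) q)"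
    using s by (simp add: prod.reindex)
  thus ?thesis using prob_crossed_all[OF _ crossed_path_subset[OF s]] by simp
qed

lemma prob_crossed_descent_le:
  assumes r: "r \<in> T3"
  shows "\<P>(\<omega> in Gamma_perc q. crossed_descent \<omega> r m) \<le> 3 * 2 ^ m * (\<Prod>k\<in>{1..m}. hD (length r + k) q)"
proof -
  interpret prob_space "Gamma_perc q" by (rule prob_space_perc_measure)
  define S where "S = {s. length s = m \<and> r @ s \<in> T3}"
  define path where "path s = (\<lambda>k. r @ take k s) ` {1..m}" for s
  have "{\<omega>\<in>space (Gamma_perc q). crossed_descent \<omega> r m}
      = (\<Union>s\<in>S. {\<omega>\<in>space (Gamma_perc q). \<forall>v\<in>path s. crossed \<omega> v})"
    unfolding crossed_descent_def S_def path_def by auto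
  moreover have "{\<omega>\<in>space (Gamma_perc q). \<forall>v\<in>path s. crossed \<omega> v} \<in> events" if "s \<in> S" for s
    using that unfolding S_def path_def by (intro sets_crossed_all crossed_path_subset) auto
  ultimately have "\<P>(\<omega> in Gamma_perc q. crossed_descent \<omega> r m)
      \<le> (\<Sum>s\<in>S. \<P>(\<omega> in Gamma_perc q. \<forall>v\<in>path s. crossed \<omega> v))"
    using card_T3_extensions(1)[OF r, of m] unfolding S_def[symmetric]
    by (auto intro!: finite_measure_subadditive_finite)
  also have "\<dots> = card S * (\<Prod>k\<in>{1..m}. hD (length r + k) q)"
    using prob_crossed_path unfolding S_def path_def by simp
  also have "\<dots> \<le> 3 * 2 ^ m * (\<Prod>k\<in>{1..m}. hD (length r + k) q)"
    using card_T3_extensions(2)[OF r, of m] unfolding S_def[symmetric]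
    by (intro mult_right_mono) (auto simp: prod_nonneg hD_nonneg dest: of_nat_mono[where 'a=real])
  finally show ?thesis .
qed

lemma null_sets_crossed_descent_all:
  assumes r: "r \<in> T3" and N: "\<And>k. N \<le> k \<Longrightarrow> hD k q \<le> c" and c: "c < 1/2"
  shows "(\<Inter>m. {\<omega>\<in>space (Gamma_perc q). crossed_descent \<omega> r m}) \<in> null_sets (Gamma_perc q)"
proof -
  interpret prob_space "Gamma_perc q" by (rule prob_space_perc_measure)
  let ?X = "\<Inter>m. {\<omega>\<in>space (Gamma_perc q). crossed_descent \<omega> r m}"
  have X: "?X \<in> sets (Gamma_perc q)" using sets_crossed_descent by (intro sets.countable_INT) auto
  have c0: "0 \<le> c" using hD_nonneg[of N q] N[of N] by linarith
  define g where "g = (\<lambda>j::nat. 3 * 2 ^ N * (2 * c) ^ j)"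
  have "measure (Gamma_perc q) ?X \<le> g j" for j
  proof -
    have "measure (Gamma_perc q) ?X \<le> \<P>(\<omega> in Gamma_perc q. crossed_descent \<omega> r (N + j))"
      using sets_crossed_descent by (intro finite_measure_mono) auto
    also have "\<dots> \<le> 3 * 2 ^ (N + j) * (\<Prod>k\<in>{1..N+j}. hD (length r + k) q)"
      by (rule prob_crossed_descent_le[OF r])
    also have "\<dots> \<le> 3 * 2 ^ (N + j) * c ^ (N + j - N)"
      using N by (intro mult_left_mono prod_le_power_if_eventually_le) (auto simp: hD_nonneg hD_le_1)
    also have "\<dots> = g j" by (simp add: g_def power_add power_mult_distrib)
    finally show ?thesis .
  qed
  moreover have "g \<longlonglongrightarrow> 3 * 2 ^ N * 0"
    unfolding g_def using c c0 by (intro tendsto_mult LIMSEQ_power_zero) auto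
  ultimately have "measure (Gamma_perc q) ?X \<le> 0"
    by (intro LIMSEQ_le_const[of g 0]) auto
  thus ?thesis using X by (simp add: emeasure_eq_measure null_sets_def measure_nonneg order_antisym)
qed

lemma theta_inf_Gamma_eq:
  "theta_inf (Gamma_V V a b) (Gamma_E E) (Gamma_ends ends a b) q
     = measure (Gamma_perc q) (\<Union>r\<in>T3. \<Inter>m. {\<omega>\<in>space (Gamma_perc q). crossed_descent \<omega> r m})"
proof -
  have "{\<omega> \<in> space (Gamma_perc q).
          \<exists>x\<in>Gamma_V V a b. infinite {y. conn (Gamma_ends ends a b) {e \<in> Gamma_E E. \<omega> e} x y}}
     = {\<omega>\<in>space (Gamma_perc q). \<exists>r\<in>T3. \<forall>m. crossed_descent \<omega> r m}"
    using infinite_cluster_iff_crossed_descent unfolding Gamma_conn_def by simp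
  also have "\<dots> = (\<Union>r\<in>T3. \<Inter>m. {\<omega>\<in>space (Gamma_perc q). crossed_descent \<omega> r m})" by auto
  finally show ?thesis by (simp add: theta_inf_def)
qed

lemma sets_crossed_descent_union:
  "(\<Union>r\<in>T3. \<Inter>m. {\<omega>\<in>space (Gamma_perc q). crossed_descent \<omega> r m}) \<in> sets (Gamma_perc q)"
  using sets_crossed_descent by (intro sets.countable_UN sets.countable_INT) auto

lemma theta_inf_Gamma_eq_0:
  assumes "limsup (\<lambda>n. ereal (hD n q)) < ereal (1/2)"
  shows "theta_inf (Gamma_V V a b) (Gamma_E E) (Gamma_ends ends a b) q = 0"
proof -
  obtain c N where c: "c < 1/2" and N: "\<And>n. N \<le> n \<Longrightarrow> hD n q \<le> c"
    using limsup_less_imp_eventually_le[OF assms] by blast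
  have "(\<Union>r\<in>T3. \<Inter>m. {\<omega>\<in>space (Gamma_perc q). crossed_descent \<omega> r m}) \<in> null_sets (Gamma_perc q)"
    using null_sets_crossed_descent_all[OF _ N c] by (intro null_sets_UN') auto
  thus ?thesis unfolding theta_inf_Gamma_eq by (simp add: measure_def null_sets_def)
qed

lemma prefixes_Cons_iff:
  "(\<forall>k\<in>{1..Suc m}. P (take k (c # s))) \<longleftrightarrow> P [c] \<and> (\<forall>k\<in>{1..m}. P (c # take k s))"
proof
  assume L: "\<forall>k\<in>{1..Suc m}. P (take k (c # s))"
  have "P (take 1 (c # s))" "\<forall>k\<in>{1..m}. P (take (Suc k) (c # s))"
    using bspec[OF L, of 1] bspec[OF L, of "Suc _"] by auto
  thus "P [c] \<and> (\<forall>k\<in>{1..m}. P (c # take k s))" by simp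
next
  assume R: "P [c] \<and> (\<forall>k\<in>{1..m}. P (c # take k s))"
  show "\<forall>k\<in>{1..Suc m}. P (take k (c # s))"
  proof
    fix k assume "k \<in> {1..Suc m}"
    then obtain k' where "k = Suc k'" "k' \<le> m" by (cases k) auto
    thus "P (take k (c # s))" using R by (cases "k' = 0") auto
  qed
qed

lemma crossed_descent_Suc_iff:
  assumes t: "t \<in> T3" "t \<noteq> []"
  shows "crossed_descent \<omega> t (Suc m) \<longleftrightarrow>
           (\<exists>c\<in>{0, 1}. crossed \<omega> (t @ [c]) \<and> crossed_descent \<omega> (t @ [c]) m)"
proof -
  have T: "t @ c # s \<in> T3 \<longleftrightarrow> c \<in> {0, 1} \<and> (t @ [c]) @ s \<in> T3" for c s
    using T3_append_iff[OF t, of "c # s"] T3_append_iff[OF t, of "[c] @ s"] by auto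
  have P: "(\<forall>k\<in>{1..Suc m}. crossed \<omega> (t @ take k (c # s)))
      \<longleftrightarrow> crossed \<omega> (t @ [c]) \<and> (\<forall>k\<in>{1..m}. crossed \<omega> ((t @ [c]) @ take k s))" for c s
    using prefixes_Cons_iff[of m "\<lambda>l. crossed \<omega> (t @ l)" c s] by simp
  show ?thesis
  proof
    assume "crossed_descent \<omega> t (Suc m)"
    then obtain s where s: "length s = Suc m" "t @ s \<in> T3" "\<forall>k\<in>{1..Suc m}. crossed \<omega> (t @ take k s)"
      unfolding crossed_descent_def by blast
    then obtain c s' where cs: "s = c # s'" by (cases s) auto
    have "c \<in> {0, 1}" "(t @ [c]) @ s' \<in> T3" using T s(2) unfolding cs by blast+
    moreover have "crossed \<omega> (t @ [c])" "\<forall>k\<in>{1..m}. crossed \<omega> ((t @ [c]) @ take k s')"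
      using P s(3) unfolding cs by blast+
    ultimately show "\<exists>c\<in>{0, 1}. crossed \<omega> (t @ [c]) \<and> crossed_descent \<omega> (t @ [c]) m"
      using s(1) cs unfolding crossed_descent_def by auto
  next
    assume "\<exists>c\<in>{0, 1}. crossed \<omega> (t @ [c]) \<and> crossed_descent \<omega> (t @ [c]) m"
    then obtain c s where c: "c \<in> {0, 1}" "crossed \<omega> (t @ [c])" "length s = m" "(t @ [c]) @ s \<in> T3"
      "\<forall>k\<in>{1..m}. crossed \<omega> ((t @ [c]) @ take k s)"
      unfolding crossed_descent_def by blast
    hence "t @ c # s \<in> T3" "\<forall>k\<in>{1..Suc m}. crossed \<omega> (t @ take k (c # s))"
      using T P by blast+
    thus "crossed_descent \<omega> t (Suc m)"
      unfolding crossed_descent_def using c(3) by (intro exI[of _ "c # s"]) simp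
  qed
qed

definition subtree_edges :: "nat list \<Rightarrow> nat \<Rightarrow> (nat list \<times> 'e) set" where
  "subtree_edges c m = copies_edges (insert c (strict_descendants c m))"

lemma finite_subtree_edges: "finite (subtree_edges c m)"
  by (simp add: subtree_edges_def finite_copies_edges finite_strict_descendants)

lemma subtree_edges_subset: "c \<in> T3 \<Longrightarrow> c \<noteq> [] \<Longrightarrow> subtree_edges c m \<subseteq> Gamma_E E"
  unfolding subtree_edges_def using strict_descendants_subset by (intro copies_edges_subset) auto

lemma determined_by_crossed_and_descent:
  "determined_by (subtree_edges c m) (\<lambda>\<omega>. crossed \<omega> c \<and> crossed_descent \<omega> c m)"
  unfolding subtree_edges_def
  by (intro determined_by_conj determined_by_crossed
      determined_by_mono[OF determined_by_crossed_descent]) (auto simp: copies_edges_def)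

lemma prob_crossed_and_descent:
  assumes c: "c \<in> T3" "c \<noteq> []"
  shows "\<P>(\<omega> in Gamma_perc q. crossed \<omega> c \<and> crossed_descent \<omega> c m)
       = hD (length c) q * \<P>(\<omega> in Gamma_perc q. crossed_descent \<omega> c m)"
proof -
  have disj: "copies_edges {c} \<inter> copies_edges (strict_descendants c m) = {}"
    by (auto simp: copies_edges_def strict_descendants_def)
  have "\<P>(\<omega> in Gamma_perc q. crossed \<omega> c \<and> crossed_descent \<omega> c m)
      = \<P>(\<omega> in Gamma_perc q. crossed \<omega> c) * \<P>(\<omega> in Gamma_perc q. crossed_descent \<omega> c m)"
    by (rule prob_perc_measure_indep[OF finite_copies_edges finite_copies_edges[OF finite_strict_descendants]
          copies_edges_subset copies_edges_subset[OF strict_descendants_subset] disj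
          determined_by_crossed determined_by_crossed_descent]) (use c in auto)
  thus ?thesis by (simp add: prob_crossed[OF c])
qed

lemma prob_crossed_descent_Suc:
  assumes t: "t \<in> T3" "t \<noteq> []"
  shows "\<P>(\<omega> in Gamma_perc q. crossed_descent \<omega> t (Suc m))
    = 1 - (1 - hD (Suc (length t)) q * \<P>(\<omega> in Gamma_perc q. crossed_descent \<omega> (t @ [0]) m))
        * (1 - hD (Suc (length t)) q * \<P>(\<omega> in Gamma_perc q. crossed_descent \<omega> (t @ [1]) m))"
proof -
  define Q where "Q = (\<lambda>c \<omega>. crossed \<omega> (t @ [c]) \<and> crossed_descent \<omega> (t @ [c]) m)"
  define J where "J = (\<lambda>c. subtree_edges (t @ [c]) m)"
  have child: "t @ [c] \<in> T3" "t @ [c] \<noteq> []" if "c \<in> {0, 1}" for c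
    using T3_snoc[OF t that] by auto
  have J: "finite (J c)" "J c \<subseteq> Gamma_E E" if "c \<in> {0, 1}" for c
    unfolding J_def using finite_subtree_edges subtree_edges_subset child[OF that] by auto
  have det: "determined_by (J c) (\<lambda>\<omega>. \<not> Q c \<omega>)" for c
    unfolding J_def Q_def by (intro determined_by_not determined_by_crossed_and_descent)
  have disj: "J 0 \<inter> J 1 = {}"
    by (auto simp: J_def subtree_edges_def copies_edges_def strict_descendants_def)
  have "\<P>(\<omega> in Gamma_perc q. \<not> Q 0 \<omega> \<and> \<not> Q 1 \<omega>)
      = \<P>(\<omega> in Gamma_perc q. \<not> Q 0 \<omega>) * \<P>(\<omega> in Gamma_perc q. \<not> Q 1 \<omega>)"
    by (rule prob_perc_measure_indep[of "J 0" "J 1"]) (use J disj det in auto)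
  moreover have "\<P>(\<omega> in Gamma_perc q. crossed_descent \<omega> t (Suc m))
      = 1 - \<P>(\<omega> in Gamma_perc q. \<not> Q 0 \<omega> \<and> \<not> Q 1 \<omega>)"
  proof -
    have "determined_by (J 0 \<union> J 1) (\<lambda>\<omega>. \<not> Q 0 \<omega> \<and> \<not> Q 1 \<omega>)"
      by (intro determined_by_conj determined_by_mono[OF det]) auto
    moreover have "crossed_descent \<omega> t (Suc m) \<longleftrightarrow> \<not> (\<not> Q 0 \<omega> \<and> \<not> Q 1 \<omega>)" for \<omega>
      unfolding crossed_descent_Suc_iff[OF t] Q_def by auto
    moreover have "finite (J 0 \<union> J 1)" "J 0 \<union> J 1 \<subseteq> Gamma_E E" using J by auto
    ultimately show ?thesis using prob_perc_measure_not[of "J 0 \<union> J 1" "Gamma_E E"] by (simp only:)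
  qed
  moreover have "\<P>(\<omega> in Gamma_perc q. \<not> Q c \<omega>)
      = 1 - hD (Suc (length t)) q * \<P>(\<omega> in Gamma_perc q. crossed_descent \<omega> (t @ [c]) m)"
    if "c \<in> {0, 1}" for c
    using prob_perc_measure_not[OF J[OF that] determined_by_not[OF det]]
      prob_crossed_and_descent[OF child[OF that]] unfolding Q_def by simp
  ultimately show ?thesis by simp
qed

lemma prob_crossed_descent_ge:
  assumes h0: "1/2 < h0" and N: "\<And>k. N < k \<Longrightarrow> h0 \<le> hD k q"
  shows "t \<in> T3 \<Longrightarrow> t \<noteq> [] \<Longrightarrow> N \<le> length t \<Longrightarrow>
    (2*h0-1)/h0^2 \<le> \<P>(\<omega> in Gamma_perc q. crossed_descent \<omega> t m)"
proof (induction m arbitrary: t)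
  case 0
  interpret prob_space "Gamma_perc q" by (rule prob_space_perc_measure)
  have "0 \<le> (h0 - 1)^2" by simp
  hence "(2*h0-1)/h0^2 \<le> 1"
    using h0 by (simp add: divide_le_eq power2_eq_square algebra_simps)
  moreover have "{\<omega>\<in>space (Gamma_perc q). crossed_descent \<omega> t 0} = space (Gamma_perc q)"
    using 0 by (auto simp: crossed_descent_def)
  ultimately show ?case by (simp add: prob_space)
next
  case (Suc m)
  interpret prob_space "Gamma_perc q" by (rule prob_space_perc_measure)
  have IH: "(2*h0-1)/h0^2 \<le> \<P>(\<omega> in Gamma_perc q. crossed_descent \<omega> (t @ [c]) m)"
    if "c \<in> {0, 1}" for c
    using Suc.IH T3_snoc[OF Suc.prems(1,2) that] Suc.prems(3) by simp
  show ?case unfolding prob_crossed_descent_Suc[OF Suc.prems(1,2)]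
    by (rule fixed_point_lower_bound[OF h0]) (use N Suc.prems(3) IH[of 0] IH[of 1] hD_le_1 prob_le_1 in auto)
qed

lemma theta_inf_Gamma_pos:
  assumes h0: "1/2 < h0" and N: "\<And>k. N < k \<Longrightarrow> h0 \<le> hD k q"
  shows "0 < theta_inf (Gamma_V V a b) (Gamma_E E) (Gamma_ends ends a b) q"
proof -
  interpret prob_space "Gamma_perc q" by (rule prob_space_perc_measure)
  define r where "r = replicate (Suc N) (0::nat)"
  have r: "r \<in> T3" "r \<noteq> []" "N \<le> length r" unfolding r_def by (auto simp: T3_Cons)
  define A where "A = (\<lambda>m. {\<omega>\<in>space (Gamma_perc q). crossed_descent \<omega> r m})"
  have "decseq A" unfolding A_def by (intro decseq_SucI) (auto intro: crossed_descent_Suc_imp)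
  moreover have "range A \<subseteq> sets (Gamma_perc q)" using sets_crossed_descent by (auto simp: A_def)
  ultimately have "(\<lambda>m. measure (Gamma_perc q) (A m)) \<longlonglongrightarrow> measure (Gamma_perc q) (\<Inter>m. A m)"
    by (intro finite_Lim_measure_decseq)
  moreover have "(2*h0-1)/h0^2 \<le> measure (Gamma_perc q) (A m)" for m
    unfolding A_def by (rule prob_crossed_descent_ge[OF h0 N r])
  ultimately have "(2*h0-1)/h0^2 \<le> measure (Gamma_perc q) (\<Inter>m. A m)"
    by (intro LIMSEQ_le_const) blast+
  moreover have "measure (Gamma_perc q) (\<Inter>m. A m) \<le> measure (Gamma_perc q) (\<Union>r\<in>T3. \<Inter>m. {\<omega>\<in>space (Gamma_perc q). crossed_descent \<omega> r m})"
    using sets_crossed_descent_union r(1) unfolding A_def by (intro finite_measure_mono) blast+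
  moreover have "0 < (2*h0-1)/h0^2" using h0 by simp
  ultimately show ?thesis unfolding theta_inf_Gamma_eq by linarith
qed

lemma hD_mono:
  assumes "0 \<le> p" "p \<le> q" "q \<le> 1"
  shows "hD n p \<le> hD n q"
proof -
  have "upset {\<tau>. conn (ends n) {e\<in>E n. \<tau> e} (a n) (b n)}"
    unfolding upset_def by (auto elim!: conn_mono[rotated])
  thus ?thesis unfolding h_conn_def using assms finite_E by (intro prob_Pi_pmf_bernoulli_upset_mono)
qed

lemma hD_0: "hD n 0 = 0"
proof -
  have "bernoulli_pmf 0 = return_pmf False"
    by (rule pmf_eqI) (auto simp: indicator_def)
  moreover have "\<not> conn (ends n) {} (a n) (b n)" using conn_empty a_ne_b by metis
  ultimately show ?thesis unfolding h_conn_def using finite_E by (simp add: indicator_def)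
qed

end

theorem lemma1:
  fixes V :: "nat \<Rightarrow> 'v set" and E :: "nat \<Rightarrow> 'e set"
    and ends :: "nat \<Rightarrow> 'e \<Rightarrow> 'v \<times> 'v" and a b :: "nat \<Rightarrow> 'v" and p :: real
  assumes finV: "\<And>n. finite (V n)" and finE: "\<And>n. finite (E n)"
    and ends_in: "\<And>n e. e \<in> E n \<Longrightarrow> fst (ends n e) \<in> V n \<and> snd (ends n e) \<in> V n"
    and a_in: "\<And>n. a n \<in> V n" and b_in: "\<And>n. b n \<in> V n" and ab: "\<And>n. a n \<noteq> b n"
    and connected: "\<And>n x y. x \<in> V n \<Longrightarrow> y \<in> V n \<Longrightarrow> conn (ends n) (E n) x y"
    and p: "p \<in> {0..1}"
  shows "(limsup (\<lambda>n. ereal (h_conn (E n) (ends n) (a n) (b n) p)) < ereal (1/2)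
            \<longrightarrow> p \<le> p_crit (Gamma_V V a b) (Gamma_E E) (Gamma_ends ends a b))
       \<and> (liminf (\<lambda>n. ereal (h_conn (E n) (ends n) (a n) (b n) p)) > ereal (1/2)
            \<longrightarrow> p \<ge> p_crit (Gamma_V V a b) (Gamma_E E) (Gamma_ends ends a b))"
proof -
  interpret tree_like_percolation V E ends a b
    by unfold_locales (use ends_in ab finV finE in auto)
  let ?theta = "theta_inf (Gamma_V V a b) (Gamma_E E) (Gamma_ends ends a b)"
  define Z where "Z = {q \<in> {0..1}. ?theta q = 0}"
  have "bdd_above Z" unfolding Z_def by (auto intro: bdd_aboveI[of _ 1])
  have "0 \<in> Z" using theta_inf_Gamma_eq_0[of 0] by (simp add: Z_def hD_0 Limsup_const)
  show ?thesis unfolding p_crit_def Z_def[symmetric]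
  proof (intro conjI impI)
    assume "limsup (\<lambda>n. ereal (hD n p)) < ereal (1/2)"
    hence "p \<in> Z" using p theta_inf_Gamma_eq_0 by (simp add: Z_def)
    thus "p \<le> Sup Z" using \<open>bdd_above Z\<close> by (rule cSup_upper)
  next
    assume "ereal (1/2) < liminf (\<lambda>n. ereal (hD n p))"
    then obtain h0 N where h0: "1/2 < h0" and N: "\<And>k. N < k \<Longrightarrow> h0 \<le> hD k p"
      by (rule liminf_greater_imp_eventually_ge) blast
    have pos: "0 < ?theta q" if "p \<le> q" "q \<le> 1" for q
    proof (rule theta_inf_Gamma_pos[OF h0])
      show "h0 \<le> hD k q" if "N < k" for k
        using N[OF that] hD_mono[of p q k] p \<open>p \<le> q\<close> \<open>q \<le> 1\<close> by auto
    qed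
    have "q \<le> p" if "q \<in> Z" for q
      using that pos[of q] by (cases "p \<le> q") (auto simp: Z_def)
    thus "Sup Z \<le> p" using \<open>0 \<in> Z\<close> by (intro cSup_least) auto
  qed
qed

end
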